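(* Let $\langle T,\le\rangle$ be a temporal flow and let $v$ be a temporal assignment over variables on $T$, extended to all formulas as described in the context. Then for every formula $\varphi$, the function $v(\varphi,\cdot):T\to\{0,\tfrac12,1\}$ is admissible.
   Context: A temporal flow is a totally ordered infinite set $\langle T,\le\rangle$. On $\{0,\frac12,1\}$ (with $0<\frac12<1$) put $\neg_3x=1-x$ and $x\to_3y=\min(1,1-x+y)$. A function $f:T\to\{0,\frac12,1\}$ is admissible if either (i) $f$ is constant (with value $0$, $\frac12$ or $1$), or (ii) there exist $i\in\{0,1\}$ and $t\in T$, with $t$ not the minimum of $T$ (if $T$ has a minimum), such that $f(t')=i$ for all $t'\ge t$ and $f(t'')=\frac12$ for all $t''<t$. Formulas are built from propositional variables and $\bot$ using the connectives $\neg$ and $\to$. A temporal assignment over variables is a map $v:VAR\times T\to\{0,\frac12,1\}$ such that $v(x,\cdot)$ is admissible for every variable $x$. It is extended to formulas inductively: $v(\bot,t)=0$; $v(\neg\psi,t)=\neg_3v(\psi,t)$; and $v(\psi\to\chi,t)=v(\psi,t)\to_3v(\chi,t)$ if $v(\psi,t)\to_3v(\chi,t)=v(\psi,t')\to_3v(\chi,t')$ for every $t'\ge t$, and $v(\psi\to\chi,t)=\frac12$ otherwise. *)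

theory Defs
  imports Complex_Main
begin

text \<open>Truth values are the reals 0, 1/2, 1 with the Lukasiewicz operations.\<close>

definition neg3 :: "real \<Rightarrow> real" where
  "neg3 x = 1 - x"

definition imp3 :: "real \<Rightarrow> real \<Rightarrow> real" where
  "imp3 x y = min 1 (1 - x + y)"

definition temporal_flow :: "'t::linorder itself \<Rightarrow> bool" where
  "temporal_flow _ \<longleftrightarrow> infinite (UNIV :: 't set)"

definition admissible :: "('t::linorder \<Rightarrow> real) \<Rightarrow> bool" where
  "admissible f \<longleftrightarrow>
     (\<exists>c \<in> {0, 1/2, 1}. \<forall>t. f t = c) \<or>
     (\<exists>i \<in> {0, 1}. \<exists>t. (\<exists>s. s < t) \<and>
        (\<forall>t'. t \<le> t' \<longrightarrow> f t' = i) \<and> (\<forall>t''. t'' < t \<longrightarrow> f t'' = 1/2))"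

datatype 'v form = Var 'v | Bot | Neg "'v form" | Imp "'v form" "'v form"

definition temporal_assignment :: "('v \<Rightarrow> 't::linorder \<Rightarrow> real) \<Rightarrow> bool" where
  "temporal_assignment v \<longleftrightarrow> (\<forall>x. admissible (v x))"

fun eval :: "('v \<Rightarrow> 't::linorder \<Rightarrow> real) \<Rightarrow> 'v form \<Rightarrow> 't \<Rightarrow> real" where
  "eval v (Var x) t = v x t"
| "eval v Bot t = 0"
| "eval v (Neg p) t = neg3 (eval v p t)"
| "eval v (Imp p q) t =
     (if \<forall>t'. t \<le> t' \<longrightarrow> imp3 (eval v p t) (eval v q t) = imp3 (eval v p t') (eval v q t')
      then imp3 (eval v p t) (eval v q t) else 1/2)"

end

theory Submission
  imports Defs
begin

text \<open>An admissible function is \<open>1/2\<close> everywhere except on a final segment \<open>U\<close> (all of \<open>T\<close>, or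
  \<open>[c, \<infinity>)\<close>), where it takes a constant value. Negation preserves this shape pointwise. For an
  implication, the pointwise value \<open>h = f \<rightarrow>\<^sub>3 g\<close> is a step function with (at most) three
  pieces \<open>V \<subseteq> W \<subseteq> T\<close>, constant \<open>A\<close> on the final segment \<open>V\<close>; the clause for \<open>\<rightarrow>\<close> keeps
  \<open>h t\<close> exactly where \<open>h\<close> equals \<open>A\<close> from \<open>t\<close> on, and the largest final segment on which
  \<open>h = A\<close> is again \<open>V\<close>, \<open>W\<close> or \<open>T\<close>.\<close>

definition final_segment :: "'t::linorder set \<Rightarrow> bool" where
  "final_segment U \<longleftrightarrow> U = UNIV \<or> (\<exists>c. U = {c..})"

definition half_before :: "'t::linorder set \<Rightarrow> real \<Rightarrow> 't \<Rightarrow> real" where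
  "half_before U e t = (if t \<in> U then e else 1/2)"

definition settle :: "('t::linorder \<Rightarrow> real) \<Rightarrow> 't \<Rightarrow> real" where
  "settle h t = (if \<forall>t'. t \<le> t' \<longrightarrow> h t = h t' then h t else 1/2)"

definition upper_core :: "'t::linorder set \<Rightarrow> 't set" where
  "upper_core P = {t. \<forall>t'. t \<le> t' \<longrightarrow> t' \<in> P}"

lemma final_segment_upward: "final_segment U \<Longrightarrow> x \<in> U \<Longrightarrow> x \<le> y \<Longrightarrow> y \<in> U"
  unfolding final_segment_def by auto

lemma final_segment_nonempty: "final_segment U \<Longrightarrow> U \<noteq> {}"
  unfolding final_segment_def by auto

lemma final_segment_linear: "final_segment U \<Longrightarrow> final_segment V \<Longrightarrow> U \<subseteq> V \<or> V \<subseteq> U"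
  unfolding final_segment_def
proof (elim disjE exE)
  fix a b assume "U = {a..}" "V = {b..}"
  then show "U \<subseteq> V \<or> V \<subseteq> U" by (cases "a \<le> b") auto
qed auto

lemma final_segment_Int: "final_segment U \<Longrightarrow> final_segment V \<Longrightarrow> final_segment (U \<inter> V)"
  using final_segment_linear by (metis inf.absorb1 inf.absorb2)

lemma final_segment_Un: "final_segment U \<Longrightarrow> final_segment V \<Longrightarrow> final_segment (U \<union> V)"
  using final_segment_linear by (metis sup.absorb1 sup.absorb2)

lemma admissible_iff_half_before:
  "admissible f \<longleftrightarrow> (\<exists>e \<in> {0, 1/2, 1}. \<exists>U. final_segment U \<and> f = half_before U e)"
proof
  assume "admissible f"
  then show "\<exists>e \<in> {0, 1/2, 1}. \<exists>U. final_segment U \<and> f = half_before U e"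
    unfolding admissible_def
  proof (elim disjE bexE exE conjE)
    fix c assume "c \<in> {0, 1/2, 1::real}" "\<forall>t. f t = c"
    then show ?thesis
      by (intro bexI[of _ c] exI[of _ UNIV]) (auto simp: final_segment_def half_before_def)
  next
    fix i t assume "i \<in> {0, 1::real}" "\<forall>t'. t \<le> t' \<longrightarrow> f t' = i" "\<forall>t''. t'' < t \<longrightarrow> f t'' = 1/2"
    then show ?thesis
      by (intro bexI[of _ i] exI[of _ "{t..}"])
        (auto simp: final_segment_def half_before_def fun_eq_iff not_le)
  qed
next
  assume "\<exists>e \<in> {0, 1/2, 1}. \<exists>U. final_segment U \<and> f = half_before U e"
  then obtain e U where e: "e \<in> {0, 1/2, 1}" and U: "final_segment U" and f: "f = half_before U e"
    by blast
  show "admissible f"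
  proof (cases "U = UNIV \<or> e = 1/2")
    case True
    then show ?thesis using e f unfolding admissible_def half_before_def by auto
  next
    case False
    then obtain c where c: "U = {c..}" using U final_segment_def by blast
    \<comment> \<open>\<open>c\<close> cannot be the minimum, since then \<open>U = UNIV\<close>\<close>
    then obtain s where "s < c" using False by (metis UNIV_eq_I atLeast_iff not_le)
    then show ?thesis using e f c False unfolding admissible_def half_before_def
      by (intro disjI2 bexI[of _ e] exI[of _ c]) (auto simp: not_le)
  qed
qed

lemma half_before_neg3: "(\<lambda>t. neg3 (half_before U e t)) = half_before U (1 - e)"
  by (auto simp: neg3_def half_before_def)

lemma admissible_neg3: "admissible f \<Longrightarrow> admissible (\<lambda>t. neg3 (f t))"
proof -
  assume "admissible f"
  then obtain e U where "e \<in> {0, 1/2, 1}" "final_segment U" "f = half_before U e"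
    unfolding admissible_iff_half_before by blast
  moreover have "1 - e \<in> {0, 1/2, 1::real}" using \<open>e \<in> {0, 1/2, 1}\<close> by auto
  ultimately show ?thesis unfolding admissible_iff_half_before using half_before_neg3 by blast
qed

lemma imp3_truth_values:
  "a \<in> {0, 1/2, 1} \<Longrightarrow> b \<in> {0, 1/2, 1} \<Longrightarrow> imp3 a b \<in> {0, 1/2, 1::real}"
  unfolding imp3_def by auto

lemma upper_core_final_segment: "final_segment U \<Longrightarrow> upper_core U = U"
  unfolding upper_core_def by (auto dest: final_segment_upward)

lemma final_segment_upper_core_gap:
  assumes V: "final_segment V" and W: "final_segment W" and "V \<subseteq> W"
  shows "final_segment (upper_core (V \<union> - W))"
proof (cases "W \<subseteq> V")
  case True
  then have "V \<union> - W = UNIV" by auto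
  then show ?thesis by (simp add: upper_core_def final_segment_def)
next
  case False
  then obtain w where w: "w \<in> W" "w \<notin> V" by auto
  have "upper_core (V \<union> - W) \<subseteq> V"
  proof
    fix t assume t: "t \<in> upper_core (V \<union> - W)"
    show "t \<in> V"
    proof (rule ccontr)
      assume "t \<notin> V"
      then have "t \<in> - W" using t by (auto simp: upper_core_def)
      \<comment> \<open>so \<open>t\<close> lies below the gap point \<open>w\<close>, which is outside \<open>V \<union> - W\<close>\<close>
      then have "t \<le> w" using w W by (meson ComplD final_segment_upward nle_le)
      then show False using t w by (auto simp: upper_core_def)
    qed
  qed
  moreover have "V \<subseteq> upper_core (V \<union> - W)"
    using V by (auto simp: upper_core_def dest: final_segment_upward)
  ultimately show ?thesis using V by auto
qed

lemma final_segment_upper_core_step: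
  fixes h :: "'t::linorder \<Rightarrow> real"
  assumes V: "final_segment V" and W: "final_segment W" and "V \<subseteq> W"
    and h: "\<And>t. h t = (if t \<in> V then A else if t \<in> W then B else C)"
  shows "final_segment (upper_core {t. h t = A})"
proof -
  consider "B = A" "C = A" | "B = A" "C \<noteq> A" | "B \<noteq> A" "C \<noteq> A" | "B \<noteq> A" "C = A"
    by blast
  then show ?thesis
  proof cases
    case 1
    then have "{t. h t = A} = UNIV" using h by auto
    then show ?thesis by (simp add: upper_core_def final_segment_def)
  next
    case 2
    then have "{t. h t = A} = W" using h \<open>V \<subseteq> W\<close> by auto
    then show ?thesis using W by (simp add: upper_core_final_segment)
  next
    case 3
    then have "{t. h t = A} = V" using h \<open>V \<subseteq> W\<close> by auto
    then show ?thesis using V by (simp add: upper_core_final_segment)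
  next
    case 4
    then have "{t. h t = A} = V \<union> - W" using h \<open>V \<subseteq> W\<close> by auto
    then show ?thesis using final_segment_upper_core_gap[OF V W \<open>V \<subseteq> W\<close>] by simp
  qed
qed

lemma settle_eq_half_before:
  assumes "\<And>t. \<exists>t'. t \<le> t' \<and> h t' = A"
  shows "settle h = half_before (upper_core {t. h t = A}) A"
proof
  fix t
  have "(\<forall>t'. t \<le> t' \<longrightarrow> h t = h t') \<longleftrightarrow> (\<forall>t'. t \<le> t' \<longrightarrow> h t' = A)"
    using assms[of t] by (metis order_refl)
  then show "settle h t = half_before (upper_core {t. h t = A}) A t"
    by (auto simp: settle_def half_before_def upper_core_def)
qed

lemma admissible_settle_imp3:
  assumes "admissible f" "admissible g"
  shows "admissible (settle (\<lambda>t. imp3 (f t) (g t)))"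
proof -
  obtain e1 U1 where e1: "e1 \<in> {0, 1/2, 1}" and U1: "final_segment U1" and f: "f = half_before U1 e1"
    using assms(1) unfolding admissible_iff_half_before by blast
  obtain e2 U2 where e2: "e2 \<in> {0, 1/2, 1}" and U2: "final_segment U2" and g: "g = half_before U2 e2"
    using assms(2) unfolding admissible_iff_half_before by blast
  define h where "h t = imp3 (f t) (g t)" for t
  define A where "A = imp3 e1 e2"
  define B where "B = (if U1 \<subseteq> U2 then imp3 (1/2) e2 else imp3 e1 (1/2))"
  have V: "final_segment (U1 \<inter> U2)" and W: "final_segment (U1 \<union> U2)"
    using U1 U2 by (simp_all add: final_segment_Int final_segment_Un)
  have h_step: "h t = (if t \<in> U1 \<inter> U2 then A else if t \<in> U1 \<union> U2 then B else imp3 (1/2) (1/2))" for t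
    using final_segment_linear[OF U1 U2] by (auto simp: h_def f g A_def B_def half_before_def)
  have "\<exists>t'. t \<le> t' \<and> h t' = A" for t
  proof -
    obtain v where "v \<in> U1 \<inter> U2" using final_segment_nonempty[OF V] by blast
    then have "max t v \<in> U1 \<inter> U2" using V final_segment_upward by (metis max.cobounded2)
    then show ?thesis using h_step by (metis max.cobounded1)
  qed
  then have "settle h = half_before (upper_core {t. h t = A}) A"
    by (rule settle_eq_half_before)
  moreover have "final_segment (upper_core {t. h t = A})"
    using final_segment_upper_core_step[OF V W _ h_step] by blast
  moreover have "A \<in> {0, 1/2, 1}" unfolding A_def using e1 e2 by (rule imp3_truth_values)
  ultimately show ?thesis unfolding admissible_iff_half_before h_def by blast
qed

lemma eval_Imp_settle: "eval v (Imp p q) = settle (\<lambda>t. imp3 (eval v p t) (eval v q t))"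
  by (auto simp: settle_def)

theorem mainTheorem2:
  fixes v :: "'v \<Rightarrow> 't::linorder \<Rightarrow> real" and phi :: "'v form"
  assumes "temporal_flow TYPE('t)"
    and "temporal_assignment v"
  shows "admissible (eval v phi)"
proof (induction phi)
  case (Var x)
  then show ?case using assms(2) by (simp add: temporal_assignment_def)
next
  case Bot
  then show ?case by (simp add: admissible_def)
next
  case (Neg p)
  then show ?case by (simp add: admissible_neg3)
next
  case (Imp p q)
  then show ?case by (simp only: eval_Imp_settle admissible_settle_imp3)
qed

end
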